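(* Let $\mathbf{x}^0\in\mathbb{R}^K$ and $\mathbf{x}^\downarrow\in\mathbb{R}^K_+$ satisfy $x^0_k\le\bar x$ and $x^0_k-x^\downarrow_k\ge\underline x$ for all $k\in\mathcal{K}$. Then $$\max_{k\in\mathcal{K}}\overline{Y}_k-\max_{k\in\mathcal{K}}\underline{Y}_k\;\le\;(T-\Delta t)\,\Delta\eta\cdot\min\Big\{-\underline x,\;\bar x,\;\frac{\bar x-\underline x}{1+\eta^{c}\eta^{d}}\Big\}.$$ Here $\overline{Y}_k$ and $\underline{Y}_k$ are the maximum state-of-charge estimates defined in the context.
   Context: Let $K$ be a positive integer, $\Delta t>0$, $T=K\Delta t$, $\mathcal{K}=\{1,\dots,K\}$, $\underline x\le0\le\bar x$, $\eta^{c},\eta^{d}\in(0,1)$, $\Delta\eta=1/\eta^{d}-\eta^{c}$, $y_0\ge0$ and $\gamma\ge0$. For fixed market decisions $\mathbf{x}^0,\mathbf{x}^\downarrow$ and $k\in\mathcal{K}$, define the relaxation estimate $\underline{Y}_k$ as the minimum of $y_0+\gamma\bar\lambda_k+\Delta t\sum_{l=1}^k\bar\Lambda_{kl}$. The minimum is taken over $\bar\lambda_k\ge0$, $\bar{\boldsymbol\Lambda}_k\in\mathbb{R}^k$ and $\upsilon_{1l},\upsilon_{2l}\in\{0,1\}$ ($l\le K-1$), subject to: - $\bar\Lambda_{kk}\ge-\eta^{c}x^0_k$, $\bar\Lambda_{kk}\ge\eta^{c}(x^\downarrow_k-x^0_k)-\bar\lambda_k$ and $\bar\Lambda_{kk}\ge0$;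 - for $l\le K-1$: $(1-\upsilon_{1l})\underline x\le x^0_l-x^\downarrow_l\le\upsilon_{1l}\bar x$ and $\upsilon_{2l}\underline x\le x^0_l\le(1-\upsilon_{2l})\bar x$; - for $l<k$: - $\bar\Lambda_{kl}\ge\frac{x^\downarrow_l-x^0_l}{\eta^{d}}-\bar\lambda_k+(1-\upsilon_{1l})\Delta\eta\,\underline x$, - $\bar\Lambda_{kl}\ge-\frac{x^0_l}{\eta^{d}}+\upsilon_{2l}\Delta\eta\,\underline x$, - $\bar\Lambda_{kl}\ge\eta^{c}(x^\downarrow_l-x^0_l)-\bar\lambda_k-\upsilon_{1l}\Delta\eta\,\bar x$, - $\bar\Lambda_{kl}\ge-\eta^{c}x^0_l-(1-\upsilon_{2l})\Delta\eta\,\bar x$. Define the restriction estimate $\overline{Y}_k$ as the same minimum, with additional binaries $\upsilon_{3l}\in\{0,1\}$ ($l\le K-1$) and additional constraints: - for $l\le K-1$: $x^\downarrow_l-(1-\eta^{c}\eta^{d})x^0_l-\eta^{d}\bar\lambda_k\ge-((2-\eta^{c}\eta^{d})\bar x-\underline x)(1-\upsilon_{3l})$; - for $l\le K-1$: $x^\downarrow_l-(1-\eta^{c}\eta^{d})x^0_l-\eta^{d}\bar\lambda_k\le\upsilon_{3l}(\eta^{c}\eta^{d}\bar x-\underline x)$; - for $l<k$: $\bar\Lambda_{kl}\ge-\eta^{c}x^0_l-(\upsilon_{1l}+1-\upsilon_{3l})\Delta\eta\,\bar x$; - for $l<k$: $\bar\Lambda_{kl}\ge\frac{x^\downarrow_l-x^0_l}{\eta^{d}}-\bar\lambda_k+(\upsilon_{2l}+\upsilon_{3l})\Delta\eta\,\underline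 x$. These are the maximum states of charge implied by the mixed-integer linear relaxation and restriction, respectively, of the exact upper state-of-charge constraint. The exact constraint includes the bilinear constraint $\bar\Lambda_{kl}x^\downarrow_l+\bar\lambda_kx^0_l\ge\upsilon_{2l}\frac{\underline x(\bar x-\underline x)}{\eta^{d}}-\upsilon_{1l}\frac{\bar x^2}{4\eta^{d}}$; the relaxation omits it, and the restriction replaces it by the constraints above. *)

theory Defs
  imports Complex_Main
begin

text \<open>Vectors in R^K are functions nat => real, indexed by 1..K.
  Binary variables are real-valued functions restricted to {0,1} on 1..K-1.\<close>

definition delta_eta :: "real \<Rightarrow> real \<Rightarrow> real" where
  "delta_eta etac etad = 1 / etad - etac"

definition relax_feas ::
  "nat \<Rightarrow> real \<Rightarrow> real \<Rightarrow> real \<Rightarrow> real \<Rightarrow> (nat \<Rightarrow> real) \<Rightarrow> (nat \<Rightarrow> real) \<Rightarrow> nat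
   \<Rightarrow> real \<Rightarrow> (nat \<Rightarrow> real) \<Rightarrow> (nat \<Rightarrow> real) \<Rightarrow> (nat \<Rightarrow> real) \<Rightarrow> bool" where
  "relax_feas K xlo xhi etac etad x0 xd k lam Lam u1 u2 \<longleftrightarrow>
     (let de = delta_eta etac etad in
     lam \<ge> 0 \<and>
     Lam k \<ge> - etac * x0 k \<and> Lam k \<ge> etac * (xd k - x0 k) - lam \<and> Lam k \<ge> 0 \<and>
     (\<forall>l\<in>{1..K-1}. u1 l \<in> {0,1} \<and> u2 l \<in> {0,1} \<and>
        (1 - u1 l) * xlo \<le> x0 l - xd l \<and> x0 l - xd l \<le> u1 l * xhi \<and>
        u2 l * xlo \<le> x0 l \<and> x0 l \<le> (1 - u2 l) * xhi) \<and>
     (\<forall>l\<in>{1..<k}.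
        Lam l \<ge> (xd l - x0 l) / etad - lam + (1 - u1 l) * de * xlo \<and>
        Lam l \<ge> - x0 l / etad + u2 l * de * xlo \<and>
        Lam l \<ge> etac * (xd l - x0 l) - lam - u1 l * de * xhi \<and>
        Lam l \<ge> - etac * x0 l - (1 - u2 l) * de * xhi))"

definition restr_feas ::
  "nat \<Rightarrow> real \<Rightarrow> real \<Rightarrow> real \<Rightarrow> real \<Rightarrow> (nat \<Rightarrow> real) \<Rightarrow> (nat \<Rightarrow> real) \<Rightarrow> nat
   \<Rightarrow> real \<Rightarrow> (nat \<Rightarrow> real) \<Rightarrow> (nat \<Rightarrow> real) \<Rightarrow> (nat \<Rightarrow> real) \<Rightarrow> (nat \<Rightarrow> real) \<Rightarrow> bool" where
  "restr_feas K xlo xhi etac etad x0 xd k lam Lam u1 u2 u3 \<longleftrightarrow>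
     (let de = delta_eta etac etad in
     relax_feas K xlo xhi etac etad x0 xd k lam Lam u1 u2 \<and>
     (\<forall>l\<in>{1..K-1}. u3 l \<in> {0,1} \<and>
        xd l - (1 - etac * etad) * x0 l - etad * lam
          \<ge> - ((2 - etac * etad) * xhi - xlo) * (1 - u3 l) \<and>
        xd l - (1 - etac * etad) * x0 l - etad * lam
          \<le> u3 l * (etac * etad * xhi - xlo)) \<and>
     (\<forall>l\<in>{1..<k}.
        Lam l \<ge> - etac * x0 l - (u1 l + 1 - u3 l) * de * xhi \<and>
        Lam l \<ge> (xd l - x0 l) / etad - lam + (u2 l + u3 l) * de * xlo))"

definition soc_obj :: "real \<Rightarrow> real \<Rightarrow> real \<Rightarrow> nat \<Rightarrow> real \<Rightarrow> (nat \<Rightarrow> real) \<Rightarrow> real" where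
  "soc_obj dt y0 gamma k lam Lam = y0 + gamma * lam + dt * (\<Sum>l=1..k. Lam l)"

text \<open>Relaxation estimate (underline Y_k): minimum of the objective over the relaxation.\<close>
definition Y_relax ::
  "nat \<Rightarrow> real \<Rightarrow> real \<Rightarrow> real \<Rightarrow> real \<Rightarrow> real \<Rightarrow> real \<Rightarrow> real
   \<Rightarrow> (nat \<Rightarrow> real) \<Rightarrow> (nat \<Rightarrow> real) \<Rightarrow> nat \<Rightarrow> real" where
  "Y_relax K dt xlo xhi etac etad y0 gamma x0 xd k =
     Inf {soc_obj dt y0 gamma k lam Lam | lam Lam u1 u2.
            relax_feas K xlo xhi etac etad x0 xd k lam Lam u1 u2}"

text \<open>Restriction estimate (overline Y_k): minimum of the objective over the restriction.\<close>
definition Y_restr ::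
  "nat \<Rightarrow> real \<Rightarrow> real \<Rightarrow> real \<Rightarrow> real \<Rightarrow> real \<Rightarrow> real \<Rightarrow> real
   \<Rightarrow> (nat \<Rightarrow> real) \<Rightarrow> (nat \<Rightarrow> real) \<Rightarrow> nat \<Rightarrow> real" where
  "Y_restr K dt xlo xhi etac etad y0 gamma x0 xd k =
     Inf {soc_obj dt y0 gamma k lam Lam | lam Lam u1 u2 u3.
            restr_feas K xlo xhi etac etad x0 xd k lam Lam u1 u2 u3}"

end

theory Submission
  imports Defs
begin

text \<open>Every feasible point \<open>(lam, Lam, u1, u2)\<close> of the relaxation for index \<open>k\<close>
  becomes a feasible point of the restriction after three changes: \<open>lam\<close> is capped at
  \<open>(xhi - xlo) / etad\<close> (which the \<open>u3\<close>-cuts need and which costs nothing, since at the cap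
  the cuts involving \<open>lam\<close> are implied by \<open>Lam l \<ge> - xhi / etad\<close>), \<open>u3 l\<close> is chosen as
  the sign of the charge slack \<open>xd l - (1 - etac * etad) * x0 l - etad * lam\<close>, and the past
  entries \<open>Lam l\<close>, \<open>l < k\<close>, are raised by \<open>delta_eta * min (- xlo) xhi\<close>. The objective
  grows by at most \<open>(k - 1) * dt * delta_eta * min (- xlo) xhi\<close>, which bounds
  \<open>Y_restr k - Y_relax k\<close> for every \<open>k\<close>, hence also the difference of the maxima. The
  third term of the minimum in the statement never binds, as
  \<open>(xhi - xlo) / (1 + etac * etad) \<ge> (xhi - xlo) / 2 \<ge> min (- xlo) xhi\<close>.\<close>

lemma min_absorbs_scaled_mean:
  fixes xlo xhi c :: real
  assumes "xlo \<le> 0" "0 \<le> xhi" "0 \<le> c" "c \<le> 1"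
  shows "min (- xlo) (min xhi ((xhi - xlo) / (1 + c))) = min (- xlo) xhi"
proof -
  have "(xhi - xlo) / 2 \<le> (xhi - xlo) / (1 + c)"
    using assms by (intro divide_left_mono) auto
  moreover have "min xhi (- xlo) \<le> (xhi - xlo) / 2" by simp
  ultimately show ?thesis by linarith
qed

lemma Max_diff_le:
  fixes f g :: "'a \<Rightarrow> 'b::linordered_ab_group_add"
  assumes "finite A" "A \<noteq> {}" "\<And>a. a \<in> A \<Longrightarrow> f a \<le> g a + c"
  shows "(MAX a\<in>A. f a) - (MAX a\<in>A. g a) \<le> c"
proof -
  obtain a where a: "a \<in> A" "(MAX a\<in>A. f a) = f a"
    using Max_in[of "f ` A"] assms(1,2) by fastforce
  have "f a \<le> g a + c" using a(1) assms(3) by blast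
  also have "\<dots> \<le> (MAX a\<in>A. g a) + c" using a(1) assms(1) by simp
  finally show ?thesis using a(2) by (simp add: diff_le_eq add.commute)
qed

lemma soc_obj_shift_past:
  assumes "1 \<le> k"
  shows "soc_obj dt y0 gamma k lam (\<lambda>l. if l < k then Lam l + c else Lam l)
       = soc_obj dt y0 gamma k lam Lam + dt * (real k - 1) * c"
proof -
  have split: "{1..k} = insert k {1..<k}" using assms by auto
  have "(\<Sum>l\<in>{1..<k}. if l < k then Lam l + c else Lam l) = (\<Sum>l\<in>{1..<k}. Lam l + c)"
    by (rule sum.cong) auto
  also have "\<dots> = (\<Sum>l\<in>{1..<k}. Lam l) + (real k - 1) * c"
    using assms by (simp add: sum.distrib of_nat_diff)
  finally have "(\<Sum>l=1..k. if l < k then Lam l + c else Lam l) = (\<Sum>l=1..k. Lam l) + (real k - 1) * c"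
    unfolding split by simp
  then show ?thesis
    unfolding soc_obj_def by (simp only:) (simp add: algebra_simps)
qed

lemma soc_obj_cap_shift_le:
  assumes "k \<in> {1..K}" "0 \<le> dt" "0 \<le> gamma" "0 \<le> c"
  shows "soc_obj dt y0 gamma k (min lam cap) (\<lambda>l. if l < k then Lam l + c else Lam l)
       \<le> soc_obj dt y0 gamma k lam Lam + (real K * dt - dt) * c"
proof -
  have "gamma * min lam cap \<le> gamma * lam" using assms(3) by (simp add: mult_left_mono)
  moreover have "dt * (real k - 1) * c \<le> dt * (real K - 1) * c"
    using assms by (intro mult_right_mono mult_left_mono) auto
  ultimately show ?thesis
    using assms(1) by (simp add: soc_obj_shift_past) (simp add: soc_obj_def algebra_simps)
qed

locale storage_limits =
  fixes xlo xhi etac etad :: real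
  assumes xlo_nonpos: "xlo \<le> 0" and xhi_nonneg: "0 \<le> xhi"
    and etac_pos: "0 < etac" and etac_lt_1: "etac < 1"
    and etad_pos: "0 < etad" and etad_lt_1: "etad < 1"
begin

abbreviation deta :: real where "deta \<equiv> delta_eta etac etad"

definition lam_cap :: real where "lam_cap = (xhi - xlo) / etad"

definition mode_binaries :: "real \<Rightarrow> real \<Rightarrow> real \<Rightarrow> real \<Rightarrow> bool" where
  "mode_binaries x0 xd u1 u2 \<longleftrightarrow> u1 \<in> {0,1} \<and> u2 \<in> {0,1} \<and>
     (1 - u1) * xlo \<le> x0 - xd \<and> x0 - xd \<le> u1 * xhi \<and>
     u2 * xlo \<le> x0 \<and> x0 \<le> (1 - u2) * xhi"

definition current_cuts :: "real \<Rightarrow> real \<Rightarrow> real \<Rightarrow> real \<Rightarrow> bool" where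
  "current_cuts lam L x0 xd \<longleftrightarrow>
     L \<ge> - etac * x0 \<and> L \<ge> etac * (xd - x0) - lam \<and> L \<ge> 0"

definition relax_past_cuts :: "real \<Rightarrow> real \<Rightarrow> real \<Rightarrow> real \<Rightarrow> real \<Rightarrow> real \<Rightarrow> bool" where
  "relax_past_cuts lam L x0 xd u1 u2 \<longleftrightarrow>
     L \<ge> (xd - x0) / etad - lam + (1 - u1) * deta * xlo \<and>
     L \<ge> - x0 / etad + u2 * deta * xlo \<and>
     L \<ge> etac * (xd - x0) - lam - u1 * deta * xhi \<and>
     L \<ge> - etac * x0 - (1 - u2) * deta * xhi"

definition restr_past_cuts :: "real \<Rightarrow> real \<Rightarrow> real \<Rightarrow> real \<Rightarrow> real \<Rightarrow> real \<Rightarrow> real \<Rightarrow> bool" where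
  "restr_past_cuts lam L x0 xd u1 u2 u3 \<longleftrightarrow>
     L \<ge> - etac * x0 - (u1 + 1 - u3) * deta * xhi \<and>
     L \<ge> (xd - x0) / etad - lam + (u2 + u3) * deta * xlo"

definition charge_slack :: "real \<Rightarrow> real \<Rightarrow> real \<Rightarrow> real" where
  "charge_slack lam x0 xd = xd - (1 - etac * etad) * x0 - etad * lam"

definition restr_mode_cuts :: "real \<Rightarrow> real \<Rightarrow> real \<Rightarrow> real \<Rightarrow> bool" where
  "restr_mode_cuts lam x0 xd u3 \<longleftrightarrow> u3 \<in> {0,1} \<and>
     charge_slack lam x0 xd \<ge> - ((2 - etac * etad) * xhi - xlo) * (1 - u3) \<and>
     charge_slack lam x0 xd \<le> u3 * (etac * etad * xhi - xlo)"

lemma relax_feas_iff: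
  "relax_feas K xlo xhi etac etad x0 xd k lam Lam u1 u2 \<longleftrightarrow>
     0 \<le> lam \<and> current_cuts lam (Lam k) (x0 k) (xd k) \<and>
     (\<forall>l\<in>{1..K-1}. mode_binaries (x0 l) (xd l) (u1 l) (u2 l)) \<and>
     (\<forall>l\<in>{1..<k}. relax_past_cuts lam (Lam l) (x0 l) (xd l) (u1 l) (u2 l))"
  unfolding relax_feas_def current_cuts_def mode_binaries_def relax_past_cuts_def Let_def
  by auto

lemma restr_feas_iff:
  "restr_feas K xlo xhi etac etad x0 xd k lam Lam u1 u2 u3 \<longleftrightarrow>
     relax_feas K xlo xhi etac etad x0 xd k lam Lam u1 u2 \<and>
     (\<forall>l\<in>{1..K-1}. restr_mode_cuts lam (x0 l) (xd l) (u3 l)) \<and>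
     (\<forall>l\<in>{1..<k}. restr_past_cuts lam (Lam l) (x0 l) (xd l) (u1 l) (u2 l) (u3 l))"
  unfolding restr_feas_def restr_mode_cuts_def charge_slack_def restr_past_cuts_def Let_def
  by auto

lemma deta_pos: "0 < deta"
proof -
  have "1 < 1 / etad" using etad_pos etad_lt_1 by simp
  then show ?thesis using etac_lt_1 unfolding delta_eta_def by linarith
qed

lemma mode_binaries_bounds:
  assumes "mode_binaries x0 xd u1 u2"
  shows "x0 \<le> xhi" "xlo \<le> x0 - xd"
  using assms xlo_nonpos xhi_nonneg unfolding mode_binaries_def by auto

lemma deta_xlo_nonpos: "deta * xlo \<le> 0"
  using deta_pos xlo_nonpos by (simp add: mult_nonneg_nonpos)

lemma cuts_at_cap_le:
  assumes "xlo \<le> x0 - xd"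
  shows "(xd - x0) / etad - lam_cap \<le> - xhi / etad"
    and "etac * (xd - x0) - lam_cap \<le> - xhi / etad"
proof -
  have cap: "lam_cap = xhi / etad - xlo / etad"
    unfolding lam_cap_def by (simp add: diff_divide_distrib)
  have "(xd - x0) / etad \<le> - xlo / etad"
    using assms etad_pos divide_right_mono[of xd "x0 - xlo" etad] by (simp add: diff_divide_distrib)
  then show "(xd - x0) / etad - lam_cap \<le> - xhi / etad" using cap by simp
  have "etac * (xd - x0) \<le> etac * (- xlo)"
    using assms etac_pos by (intro mult_left_mono) auto
  moreover have "etac * (- xlo) + xlo / etad = deta * xlo"
    unfolding delta_eta_def by (simp add: algebra_simps)
  ultimately show "etac * (xd - x0) - lam_cap \<le> - xhi / etad"
    using cap deta_xlo_nonpos by linarith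
qed

lemma relax_past_cuts_lower:
  assumes "mode_binaries x0 xd u1 u2" "relax_past_cuts lam L x0 xd u1 u2"
  shows "- xhi / etad \<le> L"
proof -
  have "u2 = 0 \<or> u2 = 1" using assms(1) unfolding mode_binaries_def by auto
  then show ?thesis
  proof
    assume "u2 = 0"
    moreover have "x0 / etad \<le> xhi / etad"
      using mode_binaries_bounds(1)[OF assms(1)] etad_pos by (simp add: divide_right_mono)
    ultimately show ?thesis using assms(2) unfolding relax_past_cuts_def by auto
  next
    assume "u2 = 1"
    then have "x0 \<le> 0" using assms(1) unfolding mode_binaries_def by simp
    then have "- etac * x0 \<ge> 0" using etac_pos by (simp add: mult_nonneg_nonpos)
    moreover have "xhi / etad \<ge> 0" using xhi_nonneg etad_pos by simp
    ultimately show ?thesis using assms(2) \<open>u2 = 1\<close> unfolding relax_past_cuts_def by auto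
  qed
qed

lemma relax_past_cuts_cap:
  assumes "mode_binaries x0 xd u1 u2" "relax_past_cuts lam L x0 xd u1 u2"
  shows "relax_past_cuts (min lam lam_cap) L x0 xd u1 u2"
proof (cases "lam \<le> lam_cap")
  case False
  have "u1 \<in> {0,1}" using assms(1) unfolding mode_binaries_def by simp
  then have "(1 - u1) * deta * xlo \<le> 0" "0 \<le> u1 * deta * xhi"
    using deta_xlo_nonpos deta_pos xhi_nonneg by auto
  moreover note cuts_at_cap_le[OF mode_binaries_bounds(2)[OF assms(1)]]
    relax_past_cuts_lower[OF assms]
  ultimately show ?thesis using False assms(2) unfolding relax_past_cuts_def by auto
qed (use assms(2) in simp)

lemma current_cuts_cap:
  assumes "xlo \<le> x0 - xd" "current_cuts lam L x0 xd"
  shows "current_cuts (min lam lam_cap) L x0 xd"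
proof -
  have "- xhi / etad \<le> 0" using xhi_nonneg etad_pos by simp
  then show ?thesis
    using cuts_at_cap_le(2)[OF assms(1)] assms(2) unfolding current_cuts_def by auto
qed

lemma relax_past_cuts_shift:
  assumes "0 \<le> c" "relax_past_cuts lam L x0 xd u1 u2"
  shows "relax_past_cuts lam (L + c) x0 xd u1 u2"
  using assms unfolding relax_past_cuts_def by auto

lemma charge_slack_nonneg_iff:
  "0 \<le> charge_slack lam x0 xd \<longleftrightarrow> - etac * x0 \<le> (xd - x0) / etad - lam"
proof -
  have "charge_slack lam x0 xd = etad * ((xd - x0) / etad - lam + etac * x0)"
    unfolding charge_slack_def using etad_pos by (simp add: field_simps)
  then show ?thesis using etad_pos by (simp add: zero_le_mult_iff, linarith)
qed

text \<open>Each restricted cut follows from the first relaxation cut up to \<open>- deta * xlo\<close>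
  or from the fourth one up to \<open>deta * xhi\<close>; the sign of the charge slack, i.e. \<open>u3\<close>,
  decides which of the two is used.\<close>

lemma restr_past_cuts_shift:
  assumes mb: "mode_binaries x0 xd u1 u2" and rc: "relax_past_cuts lam L x0 xd u1 u2"
    and m: "min (- xlo) xhi \<le> m"
  shows "restr_past_cuts lam (L + deta * m) x0 xd u1 u2 (of_bool (0 \<le> charge_slack lam x0 xd))"
proof -
  define u3 :: real where "u3 = of_bool (0 \<le> charge_slack lam x0 xd)"
  have u: "u1 \<in> {0,1}" "u2 \<in> {0,1}" "u3 \<in> {0,1}"
    using mb unfolding mode_binaries_def u3_def by auto
  have "0 \<le> deta * xhi" using deta_pos xhi_nonneg by simp
  have "0 \<le> m" "- xlo \<le> m \<or> xhi \<le> m" using m xlo_nonpos xhi_nonneg by linarith+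
  then have shift: "0 \<le> deta * m" "- (deta * xlo) \<le> deta * m \<or> deta * xhi \<le> deta * m"
    using deta_pos mult_left_mono[of "- xlo" m deta] mult_left_mono[of xhi m deta] by auto
  have "deta * xlo \<le> (1 - u1) * deta * xlo" using u(1) deta_xlo_nonpos by auto
  then have c1: "(xd - x0) / etad - lam + deta * xlo \<le> L"
    using rc unfolding relax_past_cuts_def by linarith
  have "(1 - u2) * deta * xhi \<le> deta * xhi" using u(2) \<open>0 \<le> deta * xhi\<close> by auto
  then have c4: "- etac * x0 - deta * xhi \<le> L"
    using rc unfolding relax_past_cuts_def by linarith
  have "- etac * x0 - (u1 + 1 - u3) * deta * xhi \<le> L + deta * m"
  proof (cases "u3 = 1 \<and> u1 = 0")
    case True
    then have "- etac * x0 \<le> (xd - x0) / etad - lam"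
      using charge_slack_nonneg_iff unfolding u3_def by auto
    then show ?thesis using True c1 c4 shift by auto
  next
    case False
    then have "deta * xhi \<le> (u1 + 1 - u3) * deta * xhi"
      using u \<open>0 \<le> deta * xhi\<close> by (auto simp: mult.commute)
    then show ?thesis using c4 shift by linarith
  qed
  moreover have "(xd - x0) / etad - lam + (u2 + u3) * deta * xlo \<le> L + deta * m"
  proof (cases "u2 = 0 \<and> u3 = 0")
    case True
    then have "(xd - x0) / etad - lam < - etac * x0"
      using charge_slack_nonneg_iff unfolding u3_def by auto
    then show ?thesis using True c1 c4 shift by auto
  next
    case False
    then have "(u2 + u3) * deta * xlo \<le> deta * xlo"
      using u deta_xlo_nonpos by (auto simp: mult.commute)
    then show ?thesis using c1 shift by linarith
  qed
  ultimately show ?thesis unfolding restr_past_cuts_def u3_def by simp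
qed

lemma restr_mode_cuts_charge_indicator:
  assumes "0 \<le> lam" "lam \<le> lam_cap" "0 \<le> xd" "x0 \<le> xhi" "xlo \<le> x0 - xd"
  shows "restr_mode_cuts lam x0 xd (of_bool (0 \<le> charge_slack lam x0 xd))"
proof -
  have etas: "0 < etac * etad" "etac * etad < 1"
    using etac_pos etac_lt_1 etad_pos etad_lt_1 by (auto intro: mult_strict_mono'[of etac 1 etad 1, simplified])
  have "0 \<le> etad * lam" "etad * lam \<le> xhi - xlo"
    using assms(1,2) etad_pos unfolding lam_cap_def by (auto simp: field_simps)
  moreover have "(1 - etac * etad) * x0 \<le> (1 - etac * etad) * xhi"
    "etac * etad * x0 \<le> etac * etad * xhi"
    using etas assms(4) by (auto intro: mult_left_mono)
  ultimately show ?thesis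
    using assms(3,5) unfolding restr_mode_cuts_def charge_slack_def by (auto simp: algebra_simps)
qed

lemma restr_feas_of_relax_feas:
  assumes rf: "relax_feas K xlo xhi etac etad x0 xd k lam Lam u1 u2" and k: "k \<in> {1..K}"
    and xd_nonneg: "\<forall>l\<in>{1..K}. 0 \<le> xd l" and x0_bounds: "\<forall>l\<in>{1..K}. x0 l \<le> xhi \<and> xlo \<le> x0 l - xd l"
    and m: "min (- xlo) xhi \<le> m"
  shows "restr_feas K xlo xhi etac etad x0 xd k (min lam lam_cap)
           (\<lambda>l. if l < k then Lam l + deta * m else Lam l) u1 u2
           (\<lambda>l. of_bool (0 \<le> charge_slack (min lam lam_cap) (x0 l) (xd l)))"
proof -
  have lam: "0 \<le> lam" "current_cuts lam (Lam k) (x0 k) (xd k)"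
    and mb: "\<forall>l\<in>{1..K-1}. mode_binaries (x0 l) (xd l) (u1 l) (u2 l)"
    and past: "\<forall>l\<in>{1..<k}. relax_past_cuts lam (Lam l) (x0 l) (xd l) (u1 l) (u2 l)"
    using rf unfolding relax_feas_iff by auto
  have "0 \<le> lam_cap" unfolding lam_cap_def using xlo_nonpos xhi_nonneg etad_pos by simp
  then have cap: "0 \<le> min lam lam_cap" "min lam lam_cap \<le> lam_cap" using lam(1) by auto
  have "0 \<le> deta * m" using m xlo_nonpos xhi_nonneg deta_pos by simp
  have "{1..<k} \<subseteq> {1..K-1}" using k by auto
  have "relax_past_cuts (min lam lam_cap) (Lam l + deta * m) (x0 l) (xd l) (u1 l) (u2 l) \<and>
      restr_past_cuts (min lam lam_cap) (Lam l + deta * m) (x0 l) (xd l) (u1 l) (u2 l)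
        (of_bool (0 \<le> charge_slack (min lam lam_cap) (x0 l) (xd l)))" if "l \<in> {1..<k}" for l
  proof -
    have "mode_binaries (x0 l) (xd l) (u1 l) (u2 l)"
      and "relax_past_cuts (min lam lam_cap) (Lam l) (x0 l) (xd l) (u1 l) (u2 l)"
      using that mb past relax_past_cuts_cap \<open>{1..<k} \<subseteq> {1..K-1}\<close> by blast+
    then show ?thesis
      using relax_past_cuts_shift[OF \<open>0 \<le> deta * m\<close>] restr_past_cuts_shift[OF _ _ m] by blast
  qed
  moreover have "current_cuts (min lam lam_cap) (Lam k) (x0 k) (xd k)"
    using current_cuts_cap lam(2) x0_bounds k by blast
  moreover have "restr_mode_cuts (min lam lam_cap) (x0 l) (xd l)
      (of_bool (0 \<le> charge_slack (min lam lam_cap) (x0 l) (xd l)))" if "l \<in> {1..K-1}" for l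
    using that xd_nonneg x0_bounds cap by (intro restr_mode_cuts_charge_indicator) auto
  ultimately show ?thesis
    using cap mb unfolding restr_feas_iff relax_feas_iff by auto
qed

lemma mode_binaries_sign_indicators:
  assumes "0 \<le> xd" "x0 \<le> xhi" "xlo \<le> x0 - xd"
  shows "mode_binaries x0 xd (of_bool (0 \<le> x0 - xd)) (of_bool (x0 \<le> 0))"
  using assms xlo_nonpos xhi_nonneg unfolding mode_binaries_def by auto

lemma cuts_satisfiable: "\<exists>L. current_cuts lam L x0 xd \<and> relax_past_cuts lam L x0 xd u1 u2"
proof -
  let ?a = "max (- etac * x0) (max (etac * (xd - x0) - lam) 0)"
  let ?b = "max (max ((xd - x0) / etad - lam + (1 - u1) * deta * xlo) (- x0 / etad + u2 * deta * xlo))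
     (max (etac * (xd - x0) - lam - u1 * deta * xhi) (- etac * x0 - (1 - u2) * deta * xhi))"
  show ?thesis
    by (rule exI[of _ "max ?a ?b"]) (auto simp: current_cuts_def relax_past_cuts_def le_max_iff_disj)
qed

lemma relax_feas_exists:
  assumes "\<forall>l\<in>{1..K}. 0 \<le> xd l" "\<forall>l\<in>{1..K}. x0 l \<le> xhi \<and> xlo \<le> x0 l - xd l"
  shows "\<exists>lam Lam u1 u2. relax_feas K xlo xhi etac etad x0 xd k lam Lam u1 u2"
proof -
  define u1 :: "nat \<Rightarrow> real" where "u1 l = of_bool (0 \<le> x0 l - xd l)" for l
  define u2 :: "nat \<Rightarrow> real" where "u2 l = of_bool (x0 l \<le> 0)" for l
  obtain Lam where "\<forall>l. current_cuts 0 (Lam l) (x0 l) (xd l) \<and>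
      relax_past_cuts 0 (Lam l) (x0 l) (xd l) (u1 l) (u2 l)"
    using choice[of "\<lambda>l L. current_cuts 0 L (x0 l) (xd l) \<and>
        relax_past_cuts 0 L (x0 l) (xd l) (u1 l) (u2 l)"] cuts_satisfiable by blast
  moreover have "mode_binaries (x0 l) (xd l) (u1 l) (u2 l)" if "l \<in> {1..K-1}" for l
    using that assms unfolding u1_def u2_def by (intro mode_binaries_sign_indicators) auto
  ultimately have "relax_feas K xlo xhi etac etad x0 xd k 0 Lam u1 u2"
    unfolding relax_feas_iff by auto
  then show ?thesis by blast
qed

lemma relax_obj_bdd_below:
  assumes "k \<le> K" "0 \<le> dt" "0 \<le> gamma"
  shows "bdd_below {soc_obj dt y0 gamma k lam Lam | lam Lam u1 u2.
                      relax_feas K xlo xhi etac etad x0 xd k lam Lam u1 u2}"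
proof (rule bdd_belowI)
  fix y assume "y \<in> {soc_obj dt y0 gamma k lam Lam | lam Lam u1 u2.
                      relax_feas K xlo xhi etac etad x0 xd k lam Lam u1 u2}"
  then obtain lam Lam u1 u2 where y: "y = soc_obj dt y0 gamma k lam Lam"
    and rf: "relax_feas K xlo xhi etac etad x0 xd k lam Lam u1 u2" by blast
  have "- xhi / etad \<le> Lam l" if "l \<in> {1..k}" for l
  proof (cases "l = k")
    case True
    have "- xhi / etad \<le> 0" using xhi_nonneg etad_pos by simp
    then show ?thesis using rf True unfolding relax_feas_iff current_cuts_def by auto
  next
    case False
    then have "l \<in> {1..<k}" "l \<in> {1..K-1}" using that assms(1) by auto
    then show ?thesis
      using rf relax_past_cuts_lower unfolding relax_feas_iff by blast
  qed
  then have "real k * (- xhi / etad) \<le> (\<Sum>l=1..k. Lam l)"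
    using sum_mono[of "{1..k}" "\<lambda>_. - xhi / etad" Lam] by simp
  then have "dt * (real k * (- xhi / etad)) \<le> dt * (\<Sum>l=1..k. Lam l)"
    using assms(2) by (rule mult_left_mono)
  moreover have "0 \<le> gamma * lam" using rf assms(3) unfolding relax_feas_iff by simp
  ultimately show "y0 + dt * (real k * (- xhi / etad)) \<le> y"
    unfolding y soc_obj_def by linarith
qed

lemma Y_restr_le_Y_relax:
  assumes k: "k \<in> {1..K}" and "0 \<le> dt" "0 \<le> gamma"
    and xd_nonneg: "\<forall>l\<in>{1..K}. 0 \<le> xd l" and x0_bounds: "\<forall>l\<in>{1..K}. x0 l \<le> xhi \<and> xlo \<le> x0 l - xd l"
  shows "Y_restr K dt xlo xhi etac etad y0 gamma x0 xd k
       \<le> Y_relax K dt xlo xhi etac etad y0 gamma x0 xd k + (real K * dt - dt) * deta * min (- xlo) xhi"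
proof -
  let ?C = "(real K * dt - dt) * deta * min (- xlo) xhi"
  let ?R = "{soc_obj dt y0 gamma k lam Lam | lam Lam u1 u2.
              relax_feas K xlo xhi etac etad x0 xd k lam Lam u1 u2}"
  let ?S = "{soc_obj dt y0 gamma k lam Lam | lam Lam u1 u2 u3.
              restr_feas K xlo xhi etac etad x0 xd k lam Lam u1 u2 u3}"
  have "?S \<subseteq> ?R" by (auto simp: restr_feas_iff)
  then have "bdd_below ?S"
    using k assms(2,3) by (intro bdd_below_mono[OF relax_obj_bdd_below]) auto
  have "Inf ?S - ?C \<le> Inf ?R"
  proof (rule cInf_greatest)
    obtain lam Lam u1 u2 where "relax_feas K xlo xhi etac etad x0 xd k lam Lam u1 u2"
      using relax_feas_exists[OF xd_nonneg x0_bounds] by blast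
    then show "?R \<noteq> {}" by blast
  next
    fix y assume "y \<in> ?R"
    then obtain lam Lam u1 u2 where y: "y = soc_obj dt y0 gamma k lam Lam"
      and rf: "relax_feas K xlo xhi etac etad x0 xd k lam Lam u1 u2" by blast
    let ?Lam = "\<lambda>l. if l < k then Lam l + deta * min (- xlo) xhi else Lam l"
    have "soc_obj dt y0 gamma k (min lam lam_cap) ?Lam \<in> ?S"
      using restr_feas_of_relax_feas[OF rf k xd_nonneg x0_bounds order_refl] by blast
    then have "Inf ?S \<le> soc_obj dt y0 gamma k (min lam lam_cap) ?Lam"
      using \<open>bdd_below ?S\<close> by (rule cInf_lower)
    also have "\<dots> \<le> y + ?C"
    proof -
      have "0 \<le> deta * min (- xlo) xhi" using deta_pos xlo_nonpos xhi_nonneg by simp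
      from soc_obj_cap_shift_le[OF k assms(2,3) this]
      show ?thesis unfolding y by (simp only: mult.assoc)
    qed
    finally show "Inf ?S - ?C \<le> y" by simp
  qed
  then show ?thesis unfolding Y_restr_def Y_relax_def by simp
qed

end

theorem proposition10:
  fixes K :: nat and dt xlo xhi etac etad y0 gamma :: real
    and x0 xd :: "nat \<Rightarrow> real"
  assumes "K > 0" and "dt > 0" and "xlo \<le> 0" and "0 \<le> xhi"
    and "0 < etac" and "etac < 1" and "0 < etad" and "etad < 1"
    and "y0 \<ge> 0" and "gamma \<ge> 0"
    and "\<forall>k\<in>{1..K}. xd k \<ge> 0"
    and "\<forall>k\<in>{1..K}. x0 k \<le> xhi \<and> x0 k - xd k \<ge> xlo"
  shows "(MAX k\<in>{1..K}. Y_restr K dt xlo xhi etac etad y0 gamma x0 xd k)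
         - (MAX k\<in>{1..K}. Y_relax K dt xlo xhi etac etad y0 gamma x0 xd k)
         \<le> (real K * dt - dt) * delta_eta etac etad
             * min (- xlo) (min xhi ((xhi - xlo) / (1 + etac * etad)))"
proof -
  interpret storage_limits xlo xhi etac etad
    using assms(3-8) by unfold_locales
  have "etac * etad \<le> 1"
    using assms(5-8) mult_mono[of etac 1 etad 1] by simp
  then have min_eq: "min (- xlo) (min xhi ((xhi - xlo) / (1 + etac * etad))) = min (- xlo) xhi"
    using assms(3-8) by (intro min_absorbs_scaled_mean) auto
  show ?thesis unfolding min_eq
  proof (rule Max_diff_le)
    show "{1..K} \<noteq> {}" using assms(1) by simp
  next
    fix k assume "k \<in> {1..K}"
    then show "Y_restr K dt xlo xhi etac etad y0 gamma x0 xd k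
        \<le> Y_relax K dt xlo xhi etac etad y0 gamma x0 xd k + (real K * dt - dt) * deta * min (- xlo) xhi"
      using assms(2,10-12) by (intro Y_restr_le_Y_relax) auto
  qed simp
qed

end
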